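(* Let $\mathcal{C}$ be a category with pushouts and pullbacks, equipped with a costable factorisation system $(\mathcal{E},\mathcal{M})$. Let $\mathcal{A}$ be a subcategory of $\mathcal{C}$ containing all isomorphisms and stable under pullback. Suppose that for every cospan $X\xrightarrow{f}A\xleftarrow{g}Y$ in $\mathcal{A}$, with pullback span $X\leftarrow P\rightarrow Y$ (in $\mathcal{C}$) and pushout $X\to Q\leftarrow Y$ of that span (in $\mathcal{C}$), the unique induced morphism $Q\to A$ lies in $\mathcal{M}$. Then mapping a span $X\xleftarrow{f}N\xrightarrow{g}Y$ with $f,g\in\mathcal{A}$ to the corelation represented by its pushout cospan in $\mathcal{C}$ defines an identity-on-objects functor $\Pi\colon \mathrm{Span}(\mathcal{A}) \to \mathrm{Corel}(\mathcal{C})$.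
   Context: Composition is written diagrammatically ($f;g$ means first $f$, then $g$). A factorisation system $(\mathcal{E},\mathcal{M})$ on $\mathcal{C}$: subcategories containing all isomorphisms such that every morphism factors as $e;m$ with $e\in\mathcal{E}$, $m\in\mathcal{M}$, with the unique diagonal fill-in property (given $f=e;m$, $f'=e';m'$ and $u,v$ with $f;v=u;f'$, there is a unique $s$ with $e;s=u;e'$, $m;v=s;m'$). Costable: $\mathcal{M}$ is stable under pushout (in a pushout square, if a morphism out of the apex is in $\mathcal{M}$, so is the opposite side). $\mathcal{A}$ stable under pullback: in a pullback square in $\mathcal{C}$, if a morphism into the corner lies in $\mathcal{A}$ then so does the opposite side. $\mathrm{Span}(\mathcal{C})$ has the objects of $\mathcal{C}$ and morphisms isomorphism classes of spans, composed by pullback; $\mathrm{Span}(\mathcal{A})$ is its subcategory of spans both of whose legs lie in $\mathcal{A}$. $\mathrm{Corel}(\mathcal{C})$ has the objects of $\mathcal{C}$ and morphisms $X\to Y$ the equivalence classes of cospans $X\xrightarrow{f}N\xleftarrow{g}Y$ under the equivalence relation generated by relating it to $X\xrightarrow{f'}N'\xleftarrow{g'}Y$ whenever there is $m\colon N\to N'$ in $\mathcal{M}$ with $f;m=f'$, $g;m=g'$; composition by pushout of representatives. *)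

theory Defs
  imports Main
begin

text \<open>A (small, set-based) category. Composition is written diagrammatically:
  Comp C f g means first f, then g, defined when Cod f = Dom g.\<close>

record ('o, 'a) cat =
  Obj  :: "'o set"
  Arr  :: "'a set"
  Dom  :: "'a \<Rightarrow> 'o"
  Cod  :: "'a \<Rightarrow> 'o"
  Id   :: "'o \<Rightarrow> 'a"
  Comp :: "'a \<Rightarrow> 'a \<Rightarrow> 'a"

definition hom :: "('o, 'a) cat \<Rightarrow> 'o \<Rightarrow> 'o \<Rightarrow> 'a \<Rightarrow> bool" where
  "hom C X Y f \<longleftrightarrow> f \<in> Arr C \<and> Dom C f = X \<and> Cod C f = Y"

definition category :: "('o, 'a) cat \<Rightarrow> bool" where
  "category C \<longleftrightarrow>
     (\<forall>f \<in> Arr C. Dom C f \<in> Obj C \<and> Cod C f \<in> Obj C) \<and>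
     (\<forall>X \<in> Obj C. hom C X X (Id C X)) \<and>
     (\<forall>f \<in> Arr C. \<forall>g \<in> Arr C. Cod C f = Dom C g \<longrightarrow>
         hom C (Dom C f) (Cod C g) (Comp C f g)) \<and>
     (\<forall>f \<in> Arr C. Comp C (Id C (Dom C f)) f = f \<and> Comp C f (Id C (Cod C f)) = f) \<and>
     (\<forall>f \<in> Arr C. \<forall>g \<in> Arr C. \<forall>h \<in> Arr C. Cod C f = Dom C g \<longrightarrow> Cod C g = Dom C h \<longrightarrow>
         Comp C (Comp C f g) h = Comp C f (Comp C g h))"

definition iso :: "('o, 'a) cat \<Rightarrow> 'a \<Rightarrow> bool" where
  "iso C u \<longleftrightarrow> u \<in> Arr C \<and> (\<exists>v. hom C (Cod C u) (Dom C u) v \<and>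
      Comp C u v = Id C (Dom C u) \<and> Comp C v u = Id C (Cod C u))"

definition subcat_with_isos :: "('o, 'a) cat \<Rightarrow> 'a set \<Rightarrow> bool" where
  "subcat_with_isos C S \<longleftrightarrow> S \<subseteq> Arr C \<and>
     (\<forall>u. iso C u \<longrightarrow> u \<in> S) \<and>
     (\<forall>f \<in> S. \<forall>g \<in> S. Cod C f = Dom C g \<longrightarrow> Comp C f g \<in> S)"

definition is_pullback :: "('o, 'a) cat \<Rightarrow> 'a \<Rightarrow> 'a \<Rightarrow> 'a \<Rightarrow> 'a \<Rightarrow> bool" where
  "is_pullback C f g p q \<longleftrightarrow>
     f \<in> Arr C \<and> g \<in> Arr C \<and> Cod C f = Cod C g \<and>
     hom C (Dom C p) (Dom C f) p \<and> hom C (Dom C p) (Dom C g) q \<and>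
     Comp C p f = Comp C q g \<and>
     (\<forall>p' q'. hom C (Dom C p') (Dom C f) p' \<and> hom C (Dom C p') (Dom C g) q' \<and>
        Comp C p' f = Comp C q' g \<longrightarrow>
        (\<exists>!h. hom C (Dom C p') (Dom C p) h \<and> Comp C h p = p' \<and> Comp C h q = q'))"

definition is_pushout :: "('o, 'a) cat \<Rightarrow> 'a \<Rightarrow> 'a \<Rightarrow> 'a \<Rightarrow> 'a \<Rightarrow> bool" where
  "is_pushout C f g i j \<longleftrightarrow>
     f \<in> Arr C \<and> g \<in> Arr C \<and> Dom C f = Dom C g \<and>
     hom C (Cod C f) (Cod C i) i \<and> hom C (Cod C g) (Cod C i) j \<and>
     Comp C f i = Comp C g j \<and>
     (\<forall>i' j'. hom C (Cod C f) (Cod C i') i' \<and> hom C (Cod C g) (Cod C i') j' \<and>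
        Comp C f i' = Comp C g j' \<longrightarrow>
        (\<exists>!h. hom C (Cod C i) (Cod C i') h \<and> Comp C i h = i' \<and> Comp C j h = j'))"

definition has_pullbacks :: "('o, 'a) cat \<Rightarrow> bool" where
  "has_pullbacks C \<longleftrightarrow> (\<forall>f \<in> Arr C. \<forall>g \<in> Arr C. Cod C f = Cod C g \<longrightarrow>
      (\<exists>p q. is_pullback C f g p q))"

definition has_pushouts :: "('o, 'a) cat \<Rightarrow> bool" where
  "has_pushouts C \<longleftrightarrow> (\<forall>f \<in> Arr C. \<forall>g \<in> Arr C. Dom C f = Dom C g \<longrightarrow>
      (\<exists>i j. is_pushout C f g i j))"

definition factorisation_system :: "('o, 'a) cat \<Rightarrow> 'a set \<Rightarrow> 'a set \<Rightarrow> bool" where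
  "factorisation_system C E M \<longleftrightarrow>
     subcat_with_isos C E \<and> subcat_with_isos C M \<and>
     (\<forall>f \<in> Arr C. \<exists>e m. e \<in> E \<and> m \<in> M \<and> Cod C e = Dom C m \<and> f = Comp C e m) \<and>
     (\<forall>e m e' m' u v.
        e \<in> E \<and> m \<in> M \<and> e' \<in> E \<and> m' \<in> M \<and>
        Cod C e = Dom C m \<and> Cod C e' = Dom C m' \<and>
        hom C (Dom C e) (Dom C e') u \<and> hom C (Cod C m) (Cod C m') v \<and>
        Comp C (Comp C e m) v = Comp C u (Comp C e' m') \<longrightarrow>
        (\<exists>!s. hom C (Cod C e) (Cod C e') s \<and>
              Comp C e s = Comp C u e' \<and> Comp C m v = Comp C s m'))"

definition costable :: "('o, 'a) cat \<Rightarrow> 'a set \<Rightarrow> bool" where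
  "costable C M \<longleftrightarrow> (\<forall>f g i j. is_pushout C f g i j \<longrightarrow>
      (f \<in> M \<longrightarrow> j \<in> M) \<and> (g \<in> M \<longrightarrow> i \<in> M))"

definition pullback_stable :: "('o, 'a) cat \<Rightarrow> 'a set \<Rightarrow> bool" where
  "pullback_stable C A \<longleftrightarrow> (\<forall>f g p q. is_pullback C f g p q \<longrightarrow>
      (f \<in> A \<longrightarrow> q \<in> A) \<and> (g \<in> A \<longrightarrow> p \<in> A))"

definition span_in :: "('o, 'a) cat \<Rightarrow> 'a set \<Rightarrow> 'a \<Rightarrow> 'a \<Rightarrow> bool" where
  "span_in C A f g \<longleftrightarrow> f \<in> A \<and> g \<in> A \<and> f \<in> Arr C \<and> g \<in> Arr C \<and> Dom C f = Dom C g"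

text \<open>Isomorphism of spans (the morphisms of Span are isomorphism classes of spans).\<close>
definition span_iso :: "('o, 'a) cat \<Rightarrow> 'a \<times> 'a \<Rightarrow> 'a \<times> 'a \<Rightarrow> bool" where
  "span_iso C s s' \<longleftrightarrow> (case s of (f, g) \<Rightarrow> case s' of (f', g') \<Rightarrow>
      f \<in> Arr C \<and> g \<in> Arr C \<and> Dom C f = Dom C g \<and>
      f' \<in> Arr C \<and> g' \<in> Arr C \<and> Dom C f' = Dom C g' \<and>
      (\<exists>u. iso C u \<and> hom C (Dom C f) (Dom C f') u \<and> Comp C u f' = f \<and> Comp C u g' = g))"

definition corel_step :: "('o, 'a) cat \<Rightarrow> 'a set \<Rightarrow> 'a \<times> 'a \<Rightarrow> 'a \<times> 'a \<Rightarrow> bool" where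
  "corel_step C M c c' \<longleftrightarrow> (case c of (f, g) \<Rightarrow> case c' of (f', g') \<Rightarrow>
      f \<in> Arr C \<and> g \<in> Arr C \<and> Cod C f = Cod C g \<and>
      (\<exists>m. m \<in> M \<and> hom C (Cod C f) (Cod C f') m \<and> Comp C f m = f' \<and> Comp C g m = g'))"

definition corel_eq :: "('o, 'a) cat \<Rightarrow> 'a set \<Rightarrow> 'a \<times> 'a \<Rightarrow> 'a \<times> 'a \<Rightarrow> bool" where
  "corel_eq C M = (\<lambda>c c'. corel_step C M c c' \<or> corel_step C M c' c)\<^sup>*\<^sup>*"

end

theory Submission
  imports Defs
begin

(* Each functoriality equation is witnessed by a single generating step of corel_eq, i.e. by
   a morphism of cospans lying in M out of the chosen pushout.
   Independence of the representative: two pushouts of isomorphic spans are related by an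
   isomorphism, and M contains all isomorphisms.
   Identities: the identity span is the pullback of the identity cospan, so the comparison map
   from its pushout to X lies in M by hypothesis.
   Composition: let W be the pushout of the pullback span N <- P -> N'. The comparison
   R = X +_P Z -> Q = X +_N Y +_N' Z forms a pushout square with the comparison W -> Y, which
   lies in M by hypothesis; costability of M then puts R -> Q in M.
   Pullback stability of A and the existence of pullbacks only serve to make Span(A) a
   category. *)

locale small_category =
  fixes C :: "('o, 'a) cat"
  assumes category: "category C"
begin

abbreviation comp (infixl "\<Zcomp>" 70) where "f \<Zcomp> g \<equiv> Comp C f g"

lemma comp_arr [simp]: "f \<in> Arr C \<Longrightarrow> g \<in> Arr C \<Longrightarrow> Cod C f = Dom C g \<Longrightarrow> f \<Zcomp> g \<in> Arr C"
  and dom_comp [simp]: "f \<in> Arr C \<Longrightarrow> g \<in> Arr C \<Longrightarrow> Cod C f = Dom C g \<Longrightarrow> Dom C (f \<Zcomp> g) = Dom C f"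
  and cod_comp [simp]: "f \<in> Arr C \<Longrightarrow> g \<in> Arr C \<Longrightarrow> Cod C f = Dom C g \<Longrightarrow> Cod C (f \<Zcomp> g) = Cod C g"
  using category unfolding category_def hom_def by auto

lemma comp_assoc [simp]:
  "f \<in> Arr C \<Longrightarrow> g \<in> Arr C \<Longrightarrow> h \<in> Arr C \<Longrightarrow> Cod C f = Dom C g \<Longrightarrow> Cod C g = Dom C h \<Longrightarrow>
   f \<Zcomp> g \<Zcomp> h = f \<Zcomp> (g \<Zcomp> h)"
  using category unfolding category_def by blast

lemma comp_id_left [simp]: "f \<in> Arr C \<Longrightarrow> Dom C f = X \<Longrightarrow> Id C X \<Zcomp> f = f"
  and comp_id_right [simp]: "f \<in> Arr C \<Longrightarrow> Cod C f = Y \<Longrightarrow> f \<Zcomp> Id C Y = f"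
  using category unfolding category_def by blast+

lemma id_hom: "X \<in> Obj C \<Longrightarrow> hom C X X (Id C X)"
  using category unfolding category_def by blast

lemma obj_cod: "f \<in> Arr C \<Longrightarrow> Cod C f \<in> Obj C"
  using category unfolding category_def by blast

lemma comp_hom: "hom C X Y f \<Longrightarrow> hom C Y Z g \<Longrightarrow> hom C X Z (f \<Zcomp> g)"
  by (simp add: hom_def)

lemma comp_assoc_hom:
  "hom C X Y f \<Longrightarrow> hom C Y Z g \<Longrightarrow> hom C Z W h \<Longrightarrow> f \<Zcomp> g \<Zcomp> h = f \<Zcomp> (g \<Zcomp> h)"
  by (simp add: hom_def)

lemma comp_whisker:
  "hom C X Y f \<Longrightarrow> hom C Y Z g \<Longrightarrow> hom C Z W x \<Longrightarrow> f \<Zcomp> g = e \<Longrightarrow> f \<Zcomp> (g \<Zcomp> x) = e \<Zcomp> x"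
  by (simp add: comp_assoc_hom[symmetric])

lemma isoI:
  assumes "hom C X Y u" "hom C Y X v" "u \<Zcomp> v = Id C X" "v \<Zcomp> u = Id C Y"
  shows "iso C u"
  using assms unfolding iso_def hom_def by auto

lemma iso_id: "X \<in> Obj C \<Longrightarrow> iso C (Id C X)"
  using id_hom[of X] by (intro isoI) (auto simp: hom_def)

lemma iso_cancel_left:
  assumes "iso C u" "hom C (Cod C u) Y g" "hom C (Cod C u) Y g'" "u \<Zcomp> g = u \<Zcomp> g'"
  shows "g = g'"
proof -
  obtain v where v: "hom C (Cod C u) (Dom C u) v" "v \<Zcomp> u = Id C (Cod C u)"
    using assms(1) unfolding iso_def by blast
  have "u \<in> Arr C" using assms(1) unfolding iso_def by blast
  then have "v \<Zcomp> u \<Zcomp> g = v \<Zcomp> u \<Zcomp> g'"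
    using v(1) assms(2-4) by (simp add: hom_def)
  then show ?thesis
    using v(2) assms(2,3) by (simp add: hom_def)
qed

end

lemma pushoutD:
  assumes "is_pushout C f g i j"
  shows "hom C (Dom C f) (Cod C f) f" "hom C (Dom C f) (Cod C g) g"
    "hom C (Cod C f) (Cod C i) i" "hom C (Cod C g) (Cod C i) j" "Comp C f i = Comp C g j"
  using assms unfolding is_pushout_def hom_def by auto

lemma pushoutI:
  assumes "hom C N X f" "hom C N Y g" "hom C X Q i" "hom C Y Q j" "Comp C f i = Comp C g j"
    and "\<And>T x y. hom C X T x \<Longrightarrow> hom C Y T y \<Longrightarrow> Comp C f x = Comp C g y \<Longrightarrow>
      \<exists>!h. hom C Q T h \<and> Comp C i h = x \<and> Comp C j h = y"
  shows "is_pushout C f g i j"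
  using assms unfolding is_pushout_def hom_def by auto

lemma pushout_universal:
  assumes "is_pushout C f g i j" "hom C (Cod C f) T x" "hom C (Cod C g) T y" "Comp C f x = Comp C g y"
  shows "\<exists>!h. hom C (Cod C i) T h \<and> Comp C i h = x \<and> Comp C j h = y"
proof -
  have "Cod C x = T" using assms(2) by (simp add: hom_def)
  then show ?thesis using assms unfolding is_pushout_def by blast
qed

lemma pushout_factor:
  assumes "is_pushout C f g i j" "hom C (Cod C f) T x" "hom C (Cod C g) T y" "Comp C f x = Comp C g y"
  obtains h where "hom C (Cod C i) T h" "Comp C i h = x" "Comp C j h = y"
  using pushout_universal[OF assms] by blast

lemma pullbackD:
  assumes "is_pullback C f g p q"
  shows "hom C (Dom C p) (Dom C f) p" "hom C (Dom C p) (Dom C g) q" "Comp C p f = Comp C q g"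
  using assms unfolding is_pullback_def by blast+

context small_category
begin

lemma pushout_cancel:
  assumes po: "is_pushout C f g i j" and h: "hom C (Cod C i) T h" and h': "hom C (Cod C i) T h'"
    and "i \<Zcomp> h = i \<Zcomp> h'" "j \<Zcomp> h = j \<Zcomp> h'"
  shows "h = h'"
proof -
  note D = pushoutD[OF po]
  have "\<exists>!n. hom C (Cod C i) T n \<and> i \<Zcomp> n = i \<Zcomp> h \<and> j \<Zcomp> n = j \<Zcomp> h"
  proof (rule pushout_universal[OF po])
    show "hom C (Cod C f) T (i \<Zcomp> h)" "hom C (Cod C g) T (j \<Zcomp> h)"
      using comp_hom[OF D(3) h] comp_hom[OF D(4) h] .
    show "f \<Zcomp> (i \<Zcomp> h) = g \<Zcomp> (j \<Zcomp> h)"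
      using comp_whisker[OF D(1,3) h D(5)] comp_assoc_hom[OF D(2,4) h] by simp
  qed
  then show ?thesis using assms(2-5) by auto
qed

lemma pushout_endo_eq_id:
  assumes po: "is_pushout C f g i j" and e: "hom C (Cod C i) (Cod C i) e" "i \<Zcomp> e = i" "j \<Zcomp> e = j"
  shows "e = Id C (Cod C i)"
proof (rule pushout_cancel[OF po e(1)])
  note D = pushoutD[OF po]
  show "hom C (Cod C i) (Cod C i) (Id C (Cod C i))"
    using D(3) by (intro id_hom obj_cod) (simp add: hom_def)
  show "i \<Zcomp> e = i \<Zcomp> Id C (Cod C i)" "j \<Zcomp> e = j \<Zcomp> Id C (Cod C i)"
    using e D(3,4) by (simp_all add: hom_def)
qed

lemma pushout_unique_iso:
  assumes po: "is_pushout C f g i j" and po': "is_pushout C f g i' j'"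
  obtains h where "iso C h" "hom C (Cod C i) (Cod C i') h" "i \<Zcomp> h = i'" "j \<Zcomp> h = j'"
proof -
  note D = pushoutD[OF po] and D' = pushoutD[OF po']
  obtain h where h: "hom C (Cod C i) (Cod C i') h" "i \<Zcomp> h = i'" "j \<Zcomp> h = j'"
    using pushout_factor[OF po D'(3,4,5)] .
  obtain k where k: "hom C (Cod C i') (Cod C i) k" "i' \<Zcomp> k = i" "j' \<Zcomp> k = j"
    using pushout_factor[OF po' D(3,4,5)] .
  have "h \<Zcomp> k = Id C (Cod C i)"
    by (rule pushout_endo_eq_id[OF po comp_hom[OF h(1) k(1)]])
      (use comp_assoc_hom[OF D(3) h(1) k(1)] comp_assoc_hom[OF D(4) h(1) k(1)] h k in simp_all)
  moreover have "k \<Zcomp> h = Id C (Cod C i')"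
    by (rule pushout_endo_eq_id[OF po' comp_hom[OF k(1) h(1)]])
      (use comp_assoc_hom[OF D'(3) k(1) h(1)] comp_assoc_hom[OF D'(4) k(1) h(1)] h k in simp_all)
  ultimately show thesis
    using that isoI[OF h(1) k(1)] h by blast
qed

lemma pushout_precomp_iso:
  assumes po: "is_pushout C f g i j" and u: "iso C u" "hom C N (Dom C f) u"
  shows "is_pushout C (u \<Zcomp> f) (u \<Zcomp> g) i j"
proof (rule pushoutI)
  note D = pushoutD[OF po]
  show uf: "hom C N (Cod C f) (u \<Zcomp> f)" and ug: "hom C N (Cod C g) (u \<Zcomp> g)"
    using comp_hom[OF u(2) D(1)] comp_hom[OF u(2) D(2)] .
  show "hom C (Cod C f) (Cod C i) i" "hom C (Cod C g) (Cod C i) j"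
    using D(3,4) .
  show "u \<Zcomp> f \<Zcomp> i = u \<Zcomp> g \<Zcomp> j"
    using comp_assoc_hom[OF u(2) D(1,3)] comp_assoc_hom[OF u(2) D(2,4)] D(5) by simp
  fix T x y
  assume x: "hom C (Cod C f) T x" and y: "hom C (Cod C g) T y" and "u \<Zcomp> f \<Zcomp> x = u \<Zcomp> g \<Zcomp> y"
  then have "u \<Zcomp> (f \<Zcomp> x) = u \<Zcomp> (g \<Zcomp> y)"
    using comp_assoc_hom[OF u(2) D(1) x] comp_assoc_hom[OF u(2) D(2) y] by simp
  then have "f \<Zcomp> x = g \<Zcomp> y"
    using iso_cancel_left[OF u(1)] comp_hom[OF D(1) x] comp_hom[OF D(2) y] u(2)
    by (simp add: hom_def)
  then show "\<exists>!h. hom C (Cod C i) T h \<and> i \<Zcomp> h = x \<and> j \<Zcomp> h = y"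
    by (rule pushout_universal[OF po x y])
qed

lemma pullback_id_id:
  assumes "X \<in> Obj C"
  shows "is_pullback C (Id C X) (Id C X) (Id C X) (Id C X)"
proof -
  have I: "Id C X \<in> Arr C" "Dom C (Id C X) = X" "Cod C (Id C X) = X"
    using id_hom[OF assms] by (auto simp: hom_def)
  have unique: "\<exists>!h. hom C (Dom C x) X h \<and> h \<Zcomp> Id C X = x \<and> h \<Zcomp> Id C X = y"
    if "hom C (Dom C x) X x" "hom C (Dom C x) X y" "x \<Zcomp> Id C X = y \<Zcomp> Id C X" for x y
  proof (rule ex1I)
    show "hom C (Dom C x) X x \<and> x \<Zcomp> Id C X = x \<and> x \<Zcomp> Id C X = y"
      using that by (simp add: hom_def)
  next
    fix h assume "hom C (Dom C x) X h \<and> h \<Zcomp> Id C X = x \<and> h \<Zcomp> Id C X = y"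
    then show "h = x" by (auto simp: hom_def)
  qed
  show ?thesis
    unfolding is_pullback_def I(2,3) using I(1) id_hom[OF assms] unique by blast
qed

lemma corel_eq_postcomp:
  assumes "m \<in> M" "hom C Q Q' m" "hom C X Q i" "hom C Y Q j"
  shows "corel_eq C M (i, j) (i \<Zcomp> m, j \<Zcomp> m)"
  using assms unfolding corel_eq_def corel_step_def hom_def by (auto intro!: r_into_rtranclp)

lemma span_iso_pushout_corel_eq:
  assumes iso_M: "\<And>u. iso C u \<Longrightarrow> u \<in> M" and si: "span_iso C (f, g) (f', g')"
    and po: "is_pushout C f g i j" and po': "is_pushout C f' g' i' j'"
  shows "corel_eq C M (i, j) (i', j')"
proof -
  obtain u where u: "iso C u" "hom C (Dom C f) (Dom C f') u" "u \<Zcomp> f' = f" "u \<Zcomp> g' = g"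
    using si unfolding span_iso_def by auto
  have "is_pushout C f g i' j'"
    using pushout_precomp_iso[OF po' u(1,2)] u(3,4) by simp
  then obtain h where h: "iso C h" "hom C (Cod C i) (Cod C i') h" "i \<Zcomp> h = i'" "j \<Zcomp> h = j'"
    by (rule pushout_unique_iso[OF po])
  show ?thesis
    using corel_eq_postcomp[OF iso_M[OF h(1)] h(2) pushoutD(3,4)[OF po]] h(3,4) by simp
qed

end

text \<open>The zigzag X <-f- N -g-> Y <-h- N' -k-> Z, pushed out in two stages: i, j and i', j' push out
  its two halves, and a, b push out the cospan legs j, i' out of Y.\<close>

locale zigzag_pushout = small_category C for C :: "('o, 'a) cat" +
  fixes f g h k i j i' j' a b :: 'a
  assumes po1: "is_pushout C f g i j" and po2: "is_pushout C h k i' j'" and po3: "is_pushout C j i' a b"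
begin

lemma cod_h: "Cod C h = Cod C g" and cod_j: "Cod C j = Cod C i"
  using pushoutD(4)[OF po1] pushoutD(3)[OF po2] pushoutD(2)[OF po3] by (auto simp: hom_def)

lemma f_hom: "hom C (Dom C f) (Cod C f) f" and g_hom: "hom C (Dom C f) (Cod C g) g"
  and h_hom: "hom C (Dom C h) (Cod C g) h" and k_hom: "hom C (Dom C h) (Cod C k) k"
  and i_hom: "hom C (Cod C f) (Cod C i) i" and j_hom: "hom C (Cod C g) (Cod C i) j"
  and i'_hom: "hom C (Cod C g) (Cod C i') i'" and j'_hom: "hom C (Cod C k) (Cod C i') j'"
  and a_hom: "hom C (Cod C i) (Cod C a) a" and b_hom: "hom C (Cod C i') (Cod C a) b"
  using pushoutD[OF po1] pushoutD[OF po2] pushoutD[OF po3] cod_h cod_j by auto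

lemma zigzag_commutes:
  assumes p: "hom C P (Dom C f) p" and q: "hom C P (Dom C h) q" and pq: "p \<Zcomp> g = q \<Zcomp> h"
  shows "p \<Zcomp> f \<Zcomp> (i \<Zcomp> a) = q \<Zcomp> k \<Zcomp> (j' \<Zcomp> b)"
proof -
  have "p \<Zcomp> f \<Zcomp> (i \<Zcomp> a) = p \<Zcomp> (g \<Zcomp> (j \<Zcomp> a))"
    using comp_assoc_hom[OF p f_hom comp_hom[OF i_hom a_hom]]
      comp_whisker[OF f_hom i_hom a_hom pushoutD(5)[OF po1]] comp_assoc_hom[OF g_hom j_hom a_hom]
    by simp
  also have "\<dots> = q \<Zcomp> (h \<Zcomp> (i' \<Zcomp> b))"
    using comp_whisker[OF p g_hom comp_hom[OF j_hom a_hom] pq] pushoutD(5)[OF po3]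
      comp_assoc_hom[OF q h_hom comp_hom[OF i'_hom b_hom]]
    by simp
  also have "\<dots> = q \<Zcomp> k \<Zcomp> (j' \<Zcomp> b)"
    using comp_whisker[OF h_hom i'_hom b_hom pushoutD(5)[OF po2]] comp_assoc_hom[OF k_hom j'_hom b_hom]
      comp_assoc_hom[OF q k_hom comp_hom[OF j'_hom b_hom]]
    by simp
  finally show ?thesis .
qed

lemma zigzag_factor:
  assumes x: "hom C (Cod C f) T x" and y: "hom C (Cod C g) T y" and z: "hom C (Cod C k) T z"
    and xy: "f \<Zcomp> x = g \<Zcomp> y" and yz: "h \<Zcomp> y = k \<Zcomp> z"
  obtains n where "hom C (Cod C a) T n"
    "i \<Zcomp> a \<Zcomp> n = x" "j \<Zcomp> a \<Zcomp> n = y" "j' \<Zcomp> b \<Zcomp> n = z"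
proof -
  obtain n1 where n1: "hom C (Cod C i) T n1" "i \<Zcomp> n1 = x" "j \<Zcomp> n1 = y"
    using pushout_factor[OF po1 x y xy] .
  obtain n2 where n2: "hom C (Cod C i') T n2" "i' \<Zcomp> n2 = y" "j' \<Zcomp> n2 = z"
    using pushout_factor[OF po2 _ z yz] y cod_h by metis
  obtain n where n: "hom C (Cod C a) T n" "a \<Zcomp> n = n1" "b \<Zcomp> n = n2"
    using pushout_factor[OF po3 _ n2(1)] n1 n2 cod_j by metis
  show thesis
  proof (rule that[OF n(1)])
    show "i \<Zcomp> a \<Zcomp> n = x"
      using comp_assoc_hom[OF i_hom a_hom n(1)] n(2) n1(2) by simp
    show "j \<Zcomp> a \<Zcomp> n = y"
      using comp_assoc_hom[OF j_hom a_hom n(1)] n(2) n1(3) by simp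
    show "j' \<Zcomp> b \<Zcomp> n = z"
      using comp_assoc_hom[OF j'_hom b_hom n(1)] n(3) n2(3) by simp
  qed
qed

lemma zigzag_cancel:
  assumes n: "hom C (Cod C a) T n" and n': "hom C (Cod C a) T n'"
    and X: "i \<Zcomp> a \<Zcomp> n = i \<Zcomp> a \<Zcomp> n'" and Y: "j \<Zcomp> a \<Zcomp> n = j \<Zcomp> a \<Zcomp> n'"
    and Z: "j' \<Zcomp> b \<Zcomp> n = j' \<Zcomp> b \<Zcomp> n'"
  shows "n = n'"
proof (rule pushout_cancel[OF po3 n[folded cod_j] n'[folded cod_j]])
  note ja = comp_assoc_hom[OF j_hom a_hom] and ib = comp_assoc_hom[OF i'_hom b_hom]
  show "a \<Zcomp> n = a \<Zcomp> n'"
  proof (rule pushout_cancel[OF po1 comp_hom[OF a_hom n] comp_hom[OF a_hom n']])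
    show "i \<Zcomp> (a \<Zcomp> n) = i \<Zcomp> (a \<Zcomp> n')"
      using X comp_assoc_hom[OF i_hom a_hom n] comp_assoc_hom[OF i_hom a_hom n'] by simp
    show "j \<Zcomp> (a \<Zcomp> n) = j \<Zcomp> (a \<Zcomp> n')"
      using Y ja[OF n] ja[OF n'] by simp
  qed
  show "b \<Zcomp> n = b \<Zcomp> n'"
  proof (rule pushout_cancel[OF po2 comp_hom[OF b_hom n] comp_hom[OF b_hom n']])
    show "i' \<Zcomp> (b \<Zcomp> n) = i' \<Zcomp> (b \<Zcomp> n')"
      using Y pushoutD(5)[OF po3] ja[OF n] ja[OF n'] ib[OF n] ib[OF n'] by metis
    show "j' \<Zcomp> (b \<Zcomp> n) = j' \<Zcomp> (b \<Zcomp> n')"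
      using Z comp_assoc_hom[OF j'_hom b_hom n] comp_assoc_hom[OF j'_hom b_hom n'] by simp
  qed
qed

end

text \<open>In the application W = N +_P N', R = X +_P Z and Q = X +_N Y +_N' Z. Both R +_W Y and Q
  are colimits of the zigzag, which is why the square of t, u, m and j ; a is a pushout.\<close>

locale comparison_square = zigzag_pushout C f g h k i j i' j' a b
  for C :: "('o, 'a) cat" and f g h k i j i' j' a b :: 'a +
  fixes p q c d l l' r s u t m :: 'a
  assumes pw: "is_pushout C p q c d" and cod_p: "Cod C p = Dom C f" and cod_q: "Cod C q = Dom C h"
    and po4: "is_pushout C l l' r s" and cod_l: "Cod C l = Cod C f" and cod_l': "Cod C l' = Cod C k"
    and u_hom: "hom C (Cod C c) (Cod C g) u" and c_u: "c \<Zcomp> u = g" and d_u: "d \<Zcomp> u = h"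
    and t_hom: "hom C (Cod C c) (Cod C r) t" and c_t: "c \<Zcomp> t = f \<Zcomp> r" and d_t: "d \<Zcomp> t = k \<Zcomp> s"
    and m_hom: "hom C (Cod C r) (Cod C a) m" and r_m: "r \<Zcomp> m = i \<Zcomp> a" and s_m: "s \<Zcomp> m = j' \<Zcomp> b"
begin

lemma c_hom: "hom C (Dom C f) (Cod C c) c" and d_hom: "hom C (Dom C h) (Cod C c) d"
  using pushoutD(3,4)[OF pw] cod_p cod_q by auto

lemma r_hom: "hom C (Cod C f) (Cod C r) r" and s_hom: "hom C (Cod C k) (Cod C r) s"
  using pushoutD(3,4)[OF po4] cod_l cod_l' by (auto simp: hom_def)

lemma ja_hom: "hom C (Cod C g) (Cod C a) (j \<Zcomp> a)"
  using comp_hom[OF j_hom a_hom] .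

lemma square_commutes: "t \<Zcomp> m = u \<Zcomp> (j \<Zcomp> a)"
proof (rule pushout_cancel[OF pw comp_hom[OF t_hom m_hom] comp_hom[OF u_hom ja_hom]])
  have "c \<Zcomp> (t \<Zcomp> m) = f \<Zcomp> (r \<Zcomp> m)"
    using comp_whisker[OF c_hom t_hom m_hom c_t] comp_assoc_hom[OF f_hom r_hom m_hom] by simp
  also have "\<dots> = g \<Zcomp> (j \<Zcomp> a)"
    using r_m comp_whisker[OF f_hom i_hom a_hom pushoutD(5)[OF po1]] comp_assoc_hom[OF g_hom j_hom a_hom]
    by simp
  finally show "c \<Zcomp> (t \<Zcomp> m) = c \<Zcomp> (u \<Zcomp> (j \<Zcomp> a))"
    using comp_whisker[OF c_hom u_hom ja_hom c_u] by simp
  have "d \<Zcomp> (t \<Zcomp> m) = k \<Zcomp> (s \<Zcomp> m)"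
    using comp_whisker[OF d_hom t_hom m_hom d_t] comp_assoc_hom[OF k_hom s_hom m_hom] by simp
  also have "\<dots> = h \<Zcomp> (j \<Zcomp> a)"
    using s_m comp_whisker[OF k_hom j'_hom b_hom pushoutD(5)[OF po2, symmetric]]
      comp_assoc_hom[OF h_hom i'_hom b_hom] pushoutD(5)[OF po3]
    by simp
  finally show "d \<Zcomp> (t \<Zcomp> m) = d \<Zcomp> (u \<Zcomp> (j \<Zcomp> a))"
    using comp_whisker[OF d_hom u_hom ja_hom d_u] by simp
qed

lemma square_universal:
  assumes x: "hom C (Cod C r) T x" and z: "hom C (Cod C g) T z" and tu: "t \<Zcomp> x = u \<Zcomp> z"
  shows "\<exists>!n. hom C (Cod C a) T n \<and> m \<Zcomp> n = x \<and> j \<Zcomp> a \<Zcomp> n = z"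
proof -
  have "f \<Zcomp> (r \<Zcomp> x) = g \<Zcomp> z"
    using comp_whisker[OF c_hom t_hom x c_t] comp_whisker[OF c_hom u_hom z c_u] tu
      comp_assoc_hom[OF f_hom r_hom x] by simp
  moreover have "h \<Zcomp> z = k \<Zcomp> (s \<Zcomp> x)"
    using comp_whisker[OF d_hom t_hom x d_t] comp_whisker[OF d_hom u_hom z d_u] tu
      comp_assoc_hom[OF k_hom s_hom x] by simp
  ultimately obtain n where n: "hom C (Cod C a) T n"
    "i \<Zcomp> a \<Zcomp> n = r \<Zcomp> x" "j \<Zcomp> a \<Zcomp> n = z" "j' \<Zcomp> b \<Zcomp> n = s \<Zcomp> x"
    using zigzag_factor[OF comp_hom[OF r_hom x] z comp_hom[OF s_hom x]] by metis
  have "m \<Zcomp> n = x"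
  proof (rule pushout_cancel[OF po4 comp_hom[OF m_hom n(1)] x])
    show "r \<Zcomp> (m \<Zcomp> n) = r \<Zcomp> x"
      using comp_whisker[OF r_hom m_hom n(1) r_m] comp_assoc_hom[OF i_hom a_hom n(1)] n(2) by simp
    show "s \<Zcomp> (m \<Zcomp> n) = s \<Zcomp> x"
      using comp_whisker[OF s_hom m_hom n(1) s_m] comp_assoc_hom[OF j'_hom b_hom n(1)] n(4) by simp
  qed
  moreover have "n' = n" if n': "hom C (Cod C a) T n'" "m \<Zcomp> n' = x" "j \<Zcomp> a \<Zcomp> n' = z" for n'
  proof (rule zigzag_cancel[OF n'(1) n(1)])
    show "i \<Zcomp> a \<Zcomp> n' = i \<Zcomp> a \<Zcomp> n"
      using comp_assoc_hom[OF r_hom m_hom n'(1)] comp_assoc_hom[OF i_hom a_hom n'(1)] n'(2) r_m n(2)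
      by simp
    show "j' \<Zcomp> b \<Zcomp> n' = j' \<Zcomp> b \<Zcomp> n"
      using comp_assoc_hom[OF s_hom m_hom n'(1)] comp_assoc_hom[OF j'_hom b_hom n'(1)] n'(2) s_m n(4)
      by simp
    show "j \<Zcomp> a \<Zcomp> n' = j \<Zcomp> a \<Zcomp> n"
      using n'(3) n(3) by simp
  qed
  ultimately show ?thesis
    using n(1,3) by blast
qed

lemma square_is_pushout: "is_pushout C t u m (j \<Zcomp> a)"
  using t_hom u_hom m_hom ja_hom square_commutes square_universal by (rule pushoutI)

end

locale pullback_pushout_comparison = small_category C for C :: "('o, 'a) cat" +
  fixes A M :: "'a set"
  assumes comparison_in_M: "\<And>f g p q i j u.
       f \<in> A \<Longrightarrow> g \<in> A \<Longrightarrow> Cod C f = Cod C g \<Longrightarrow>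
       is_pullback C f g p q \<Longrightarrow> is_pushout C p q i j \<Longrightarrow>
       hom C (Cod C i) (Cod C f) u \<Longrightarrow> i \<Zcomp> u = f \<Longrightarrow> j \<Zcomp> u = g \<Longrightarrow> u \<in> M"
begin

lemma id_span_pushout_corel_eq:
  assumes X: "X \<in> Obj C" "Id C X \<in> A" and po: "is_pushout C (Id C X) (Id C X) i j"
  shows "corel_eq C M (i, j) (Id C X, Id C X)"
proof -
  have I: "hom C X X (Id C X)" and cod: "Cod C (Id C X) = X"
    using id_hom[OF X(1)] by (auto simp: hom_def)
  obtain u where u: "hom C (Cod C i) X u" "i \<Zcomp> u = Id C X" "j \<Zcomp> u = Id C X"
    using pushout_factor[OF po] I unfolding cod by blast
  have "u \<in> M"
    using comparison_in_M[OF X(2) X(2) refl pullback_id_id[OF X(1)] po] u unfolding cod by blast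
  then show ?thesis
    using corel_eq_postcomp[OF _ u(1) pushoutD(3,4)[OF po]] u(2,3) unfolding cod by simp
qed

lemma composite_span_pushout_corel_eq:
  assumes pushouts: "has_pushouts C" and cost: "costable C M"
    and A: "g \<in> A" "h \<in> A" and pb: "is_pullback C g h p q"
    and po1: "is_pushout C f g i j" and po2: "is_pushout C h k i' j'" and po3: "is_pushout C j i' a b"
    and po4: "is_pushout C (p \<Zcomp> f) (q \<Zcomp> k) r s"
  shows "corel_eq C M (r, s) (i \<Zcomp> a, j' \<Zcomp> b)"
proof -
  interpret zigzag_pushout C f g h k i j i' j' a b
    using po1 po2 po3 by unfold_locales
  have p: "hom C (Dom C p) (Dom C f) p" and q: "hom C (Dom C p) (Dom C h) q"
    and pq: "p \<Zcomp> g = q \<Zcomp> h"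
    using pullbackD[OF pb] g_hom by (auto simp: hom_def)
  have cod_p: "Cod C p = Dom C f" "Cod C q = Dom C h"
    and cod_pf: "Cod C (p \<Zcomp> f) = Cod C f" "Cod C (q \<Zcomp> k) = Cod C k"
    using p q comp_hom[OF p f_hom] comp_hom[OF q k_hom] by (simp_all add: hom_def)
  have r: "hom C (Cod C f) (Cod C r) r" and s: "hom C (Cod C k) (Cod C r) s"
    using pushoutD(3,4)[OF po4] unfolding cod_pf .
  have "p \<in> Arr C" "q \<in> Arr C" "Dom C p = Dom C q"
    using p q by (simp_all add: hom_def)
  then obtain c d where pw: "is_pushout C p q c d"
    using pushouts unfolding has_pushouts_def by blast
  obtain u where u: "hom C (Cod C c) (Cod C g) u" "c \<Zcomp> u = g" "d \<Zcomp> u = h"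
    using pushout_factor[OF pw] g_hom h_hom pq unfolding cod_p by blast
  have "p \<Zcomp> (f \<Zcomp> r) = q \<Zcomp> (k \<Zcomp> s)"
    using pushoutD(5)[OF po4] comp_assoc_hom[OF p f_hom r] comp_assoc_hom[OF q k_hom s] by simp
  then obtain t where t: "hom C (Cod C c) (Cod C r) t" "c \<Zcomp> t = f \<Zcomp> r" "d \<Zcomp> t = k \<Zcomp> s"
    using pushout_factor[OF pw] comp_hom[OF f_hom r] comp_hom[OF k_hom s] unfolding cod_p by blast
  obtain m where m: "hom C (Cod C r) (Cod C a) m" "r \<Zcomp> m = i \<Zcomp> a" "s \<Zcomp> m = j' \<Zcomp> b"
    using pushout_factor[OF po4] zigzag_commutes[OF p q pq] comp_hom[OF i_hom a_hom]
      comp_hom[OF j'_hom b_hom]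
    unfolding cod_pf by blast
  interpret comparison_square C f g h k i j i' j' a b p q c d "p \<Zcomp> f" "q \<Zcomp> k" r s u t m
    using pw cod_p po4 cod_pf u t m by unfold_locales
  have "m \<in> M"
    using cost square_is_pushout comparison_in_M[OF A cod_h[symmetric] pb pw u]
    unfolding costable_def by blast
  then show ?thesis
    using corel_eq_postcomp[OF _ m(1) r s] m(2,3) by simp
qed

end

theorem proposition2p9:
  fixes C :: "('o, 'a) cat" and E M A :: "'a set"
  assumes cat: "category C"
    and po: "has_pushouts C" and pb: "has_pullbacks C"
    and fs: "factorisation_system C E M" and cost: "costable C M"
    and subA: "subcat_with_isos C A" and stabA: "pullback_stable C A"
    and hyp: "\<And>f g p q i j u.
       f \<in> A \<Longrightarrow> g \<in> A \<Longrightarrow> Cod C f = Cod C g \<Longrightarrow>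
       is_pullback C f g p q \<Longrightarrow> is_pushout C p q i j \<Longrightarrow>
       hom C (Cod C i) (Cod C f) u \<Longrightarrow> Comp C i u = f \<Longrightarrow> Comp C j u = g \<Longrightarrow> u \<in> M"
  shows
    \<comment> \<open>well-defined on isomorphism classes of spans (independent of representative
        and of the chosen pushout)\<close>
    "(\<forall>f g f' g' i j i' j'.
        span_in C A f g \<and> span_in C A f' g' \<and> span_iso C (f, g) (f', g') \<and>
        is_pushout C f g i j \<and> is_pushout C f' g' i' j' \<longrightarrow>
        corel_eq C M (i, j) (i', j'))
     \<and>
     \<comment> \<open>preserves identities\<close>
     (\<forall>X \<in> Obj C. \<forall>i j. is_pushout C (Id C X) (Id C X) i j \<longrightarrow>
        corel_eq C M (i, j) (Id C X, Id C X))
     \<and>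
     \<comment> \<open>preserves composition: span composite by pullback, corelation composite by pushout\<close>
     (\<forall>f g h k p q i j i' j' a b r s.
        span_in C A f g \<and> span_in C A h k \<and> Cod C g = Cod C h \<and>
        is_pullback C g h p q \<and>
        is_pushout C f g i j \<and> is_pushout C h k i' j' \<and>
        is_pushout C j i' a b \<and>
        is_pushout C (Comp C p f) (Comp C q k) r s \<longrightarrow>
        corel_eq C M (r, s) (Comp C i a, Comp C j' b))"
proof -
  interpret pullback_pushout_comparison C A M
    using cat hyp by unfold_locales
  have iso_M: "\<And>u. iso C u \<Longrightarrow> u \<in> M"
    using fs unfolding factorisation_system_def subcat_with_isos_def by blast
  have id_A: "Id C X \<in> A" if "X \<in> Obj C" for X
    using subA iso_id[OF that] unfolding subcat_with_isos_def by blast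
  show ?thesis
    unfolding span_in_def
    by (intro conjI allI impI ballI; (elim conjE)?)
      (blast intro: span_iso_pushout_corel_eq[OF iso_M] id_span_pushout_corel_eq id_A
         composite_span_pushout_corel_eq[OF po cost])+
qed

end
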